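(* Let $s,k,T\in\mathbb{N}$ and let $\mathcal{D}$ be a distribution on $\{0,1\}^T$. Then \[ \mathbf{S}^{s,k}[\mathcal{D}]\le \Pr_{w\sim\mathcal{D}}[\text{slot } s \text{ is not } k\text{-settled for } w]. \]
   Context: Characteristic strings and forks. A characteristic string is $w=w_1\dots w_n\in\{0,1\}^n$; index $i$ is honest if $w_i=0$ and adversarial if $w_i=1$. A fork for $w$ is a rooted tree $F=(V,E)$ with edges directed away from the root $r$, together with a labeling $\ell:V\to\{0,\dots,n\}$, such that (F1) $\ell(r)=0$; (F2) labels strictly increase along every directed path; (F3) every honest index is the label of exactly one vertex; (F4) if $i<j$ are honest indices then the vertex labeled $i$ has strictly smaller depth than the vertex labeled $j$. Write $F\vdash w$. A tine is a directed path starting at the root; its length is its number of edges. For $x$ a prefix of $w$, $F\vdash x$, $F'\vdash w$, $F\sqsubseteq F'$ means $F$ is a subgraph of $F'$ with identical labels. Settlement. For $w\in\{0,1\}^n$ and a fork $F\vdash w_1\dots w_t$ with $s+k\le t\le n$, slot $s$ is not $k$-settled in $F$ if $F$ contains two tines of maximum length which either contain different vertices labeled $s$, or one contains a vertex labeled $s$ and the other does not; otherwise it is $k$-settled in $F$. Slot $s$ is $k$-settled for $w$ if it is $k$-settled in every fork $F\vdash w_1\dots w_t$ for every $t\ge s+k$. Settlement game. For a distribution $\mathcal{D}$ on $\{0,1\}^T$, the $(\mathcal{D},T;s,k)$-settlement game between an adversary $\mathcal{A}$ and a deterministic challenger: (1) $w\in\{0,1\}^T$ is drawn from $\mathcal{D}$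 and given to $\mathcal{A}$; (2) $A_0$ is the single-vertex fork for the empty string; (3) for $t=1,\dots,T$: (a) if $w_t=0$, the challenger forms $F_t\vdash w_1\dots w_t$ by adding one vertex labeled $t$ to the end of a longest path of $A_{t-1}$ (ties broken by $\mathcal{A}$); (b) if $w_t=1$, $\mathcal{A}$ chooses an arbitrary fork $F_t\vdash w_1\dots w_t$ with $A_{t-1}\sqsubseteq F_t$; (c) $\mathcal{A}$ chooses an arbitrary fork $A_t\vdash w_1\dots w_t$ with $F_t\sqsubseteq A_t$. $\mathcal{A}$ wins if slot $s$ is not $k$-settled in some $A_t$ with $t\ge s+k$. $\mathbf{S}^{s,k}[\mathcal{D}]=\max_{\mathcal{A}}\Pr[\mathcal{A}\text{ wins}]$. *)

theory Defs
  imports "HOL-Probability.Probability_Mass_Function"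
begin

text \<open>Characteristic strings are bool lists; True means adversarial (symbol 1),
  False means honest (symbol 0). Index i (1-based) corresponds to w ! (i - 1).\<close>

definition honest_idx :: "bool list \<Rightarrow> nat \<Rightarrow> bool" where
  "honest_idx w i \<longleftrightarrow> 1 \<le> i \<and> i \<le> length w \<and> \<not> w ! (i - 1)"

record fork =
  verts :: "nat set"
  edges :: "(nat \<times> nat) set"
  root  :: nat
  lab   :: "nat \<Rightarrow> nat"

definition is_tine :: "fork \<Rightarrow> nat list \<Rightarrow> bool" where
  "is_tine F p \<longleftrightarrow> p \<noteq> [] \<and> hd p = root F \<and> set p \<subseteq> verts F \<and>
     (\<forall>i. i + 1 < length p \<longrightarrow> (p ! i, p ! (i + 1)) \<in> edges F)"

definition tine_len :: "nat list \<Rightarrow> nat" where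
  "tine_len p = length p - 1"

definition is_fork :: "bool list \<Rightarrow> fork \<Rightarrow> bool" where
  "is_fork w F \<longleftrightarrow>
     \<comment> \<open>rooted tree with edges directed away from the root\<close>
     finite (verts F) \<and> root F \<in> verts F \<and> edges F \<subseteq> verts F \<times> verts F \<and>
     (\<forall>(u, v) \<in> edges F. v \<noteq> root F) \<and>
     (\<forall>v \<in> verts F - {root F}. \<exists>!u. (u, v) \<in> edges F) \<and>
     (\<forall>v \<in> verts F. \<exists>p. is_tine F p \<and> last p = v) \<and>
     \<comment> \<open>labels in {0..n}\<close>
     (\<forall>v \<in> verts F. lab F v \<le> length w) \<and>
     \<comment> \<open>(F1)\<close>
     lab F (root F) = 0 \<and>
     \<comment> \<open>(F2) labels strictly increase along edges, hence along directed paths\<close>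
     (\<forall>(u, v) \<in> edges F. lab F u < lab F v) \<and>
     \<comment> \<open>(F3)\<close>
     (\<forall>i. honest_idx w i \<longrightarrow> (\<exists>!v. v \<in> verts F \<and> lab F v = i)) \<and>
     \<comment> \<open>(F4) depth of a vertex = length of the tine ending in it\<close>
     (\<forall>i j p q. honest_idx w i \<and> honest_idx w j \<and> i < j \<and> is_tine F p \<and> is_tine F q \<and>
        lab F (last p) = i \<and> lab F (last q) = j \<longrightarrow> tine_len p < tine_len q)"

definition subfork :: "fork \<Rightarrow> fork \<Rightarrow> bool" where
  "subfork F F' \<longleftrightarrow> verts F \<subseteq> verts F' \<and> edges F \<subseteq> edges F' \<and>
     (\<forall>v \<in> verts F. lab F' v = lab F v)"

definition max_tine :: "fork \<Rightarrow> nat list \<Rightarrow> bool" where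
  "max_tine F p \<longleftrightarrow> is_tine F p \<and> (\<forall>q. is_tine F q \<longrightarrow> tine_len q \<le> tine_len p)"

definition not_settled_in :: "fork \<Rightarrow> nat \<Rightarrow> bool" where
  "not_settled_in F s \<longleftrightarrow> (\<exists>p q. max_tine F p \<and> max_tine F q \<and>
     ((\<exists>u \<in> set p. \<exists>v \<in> set q. lab F u = s \<and> lab F v = s \<and> u \<noteq> v) \<or>
      ((\<exists>u \<in> set p. lab F u = s) \<and> \<not> (\<exists>v \<in> set q. lab F v = s))))"

definition settled_for :: "bool list \<Rightarrow> nat \<Rightarrow> nat \<Rightarrow> bool" where
  "settled_for w s k \<longleftrightarrow>
     (\<forall>t F. s + k \<le> t \<and> t \<le> length w \<and> is_fork (take t w) F \<longrightarrow> \<not> not_settled_in F s)"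

definition valid_play :: "bool list \<Rightarrow> (nat \<Rightarrow> fork) \<Rightarrow> (nat \<Rightarrow> fork) \<Rightarrow> bool" where
  "valid_play w A F \<longleftrightarrow>
     verts (A 0) = {root (A 0)} \<and> edges (A 0) = {} \<and> lab (A 0) (root (A 0)) = 0 \<and>
     (\<forall>t. 1 \<le> t \<and> t \<le> length w \<longrightarrow>
        (\<not> w ! (t - 1) \<longrightarrow>
           (\<exists>p v. max_tine (A (t - 1)) p \<and> v \<notin> verts (A (t - 1)) \<and>
              verts (F t) = insert v (verts (A (t - 1))) \<and>
              edges (F t) = insert (last p, v) (edges (A (t - 1))) \<and>
              root (F t) = root (A (t - 1)) \<and>
              (\<forall>u \<in> verts (A (t - 1)). lab (F t) u = lab (A (t - 1)) u) \<and>
              lab (F t) v = t)) \<and>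
        (w ! (t - 1) \<longrightarrow> is_fork (take t w) (F t) \<and> subfork (A (t - 1)) (F t)) \<and>
        is_fork (take t w) (A t) \<and> subfork (F t) (A t))"

definition wins :: "nat \<Rightarrow> nat \<Rightarrow> bool list \<Rightarrow> (nat \<Rightarrow> fork) \<Rightarrow> bool" where
  "wins s k w A \<longleftrightarrow> (\<exists>t. s + k \<le> t \<and> t \<le> length w \<and> not_settled_in (A t) s)"

text \<open>An adversary sees the whole string w and then makes all its choices; a
  (deterministic) adversary is thus a map from strings to legal plays.\<close>
definition valid_adversary :: "nat \<Rightarrow> (bool list \<Rightarrow> (nat \<Rightarrow> fork) \<times> (nat \<Rightarrow> fork)) \<Rightarrow> bool" where
  "valid_adversary T adv \<longleftrightarrow>
     (\<forall>w. length w = T \<longrightarrow> valid_play w (fst (adv w)) (snd (adv w)))"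

definition settlement_value :: "bool list pmf \<Rightarrow> nat \<Rightarrow> nat \<Rightarrow> nat \<Rightarrow> real" where
  "settlement_value D T s k =
     (SUP adv \<in> {adv. valid_adversary T adv}.
        measure_pmf.prob D {w. wins s k w (fst (adv w))})"

end

theory Submission
  imports Defs
begin

(*
  An adversary wins only by exhibiting a fork A_t for a prefix w_1 ... w_t with t >= s + k
  in which slot s is not settled; such a fork witnesses that s is not k-settled for w.
  Hence every adversary wins with probability at most Pr[s is not k-settled for w].

  To pass from this bound to the supremum one needs a legal adversary at all, as the
  supremum of the empty set of reals is unspecified. The passive adversary, which never
  adds vertices, is legal: the challenger's extension of a fork by a new leaf at the end
  of a longest tine is again a fork, with the new honest vertex strictly deeper than all
  earlier ones.
*)

lemma is_forkD:
  assumes "is_fork w F"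
  shows fork_finite: "finite (verts F)"
    and fork_root_in_verts: "root F \<in> verts F"
    and fork_edges_subset: "edges F \<subseteq> verts F \<times> verts F"
    and fork_no_edge_into_root: "(u, root F) \<notin> edges F"
    and fork_parent_exists: "v \<in> verts F \<Longrightarrow> v \<noteq> root F \<Longrightarrow> \<exists>u. (u, v) \<in> edges F"
    and fork_parent_unique: "(u, v) \<in> edges F \<Longrightarrow> (u', v) \<in> edges F \<Longrightarrow> u = u'"
    and fork_vertex_reachable: "v \<in> verts F \<Longrightarrow> \<exists>p. is_tine F p \<and> last p = v"
    and fork_lab_le: "v \<in> verts F \<Longrightarrow> lab F v \<le> length w"
    and fork_lab_root: "lab F (root F) = 0"
    and fork_lab_edge: "(u, v) \<in> edges F \<Longrightarrow> lab F u < lab F v"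
    and fork_honest_ex1: "honest_idx w i \<Longrightarrow> \<exists>!v. v \<in> verts F \<and> lab F v = i"
    and fork_honest_depth: "\<lbrakk>honest_idx w i; honest_idx w j; i < j; is_tine F p; is_tine F q;
        lab F (last p) = i; lab F (last q) = j\<rbrakk> \<Longrightarrow> tine_len p < tine_len q"
proof -
  obtain fin: "finite (verts F)" and rt: "root F \<in> verts F"
    and sub: "edges F \<subseteq> verts F \<times> verts F" and nort: "\<forall>(u, v) \<in> edges F. v \<noteq> root F"
    and par: "\<forall>v \<in> verts F - {root F}. \<exists>!u. (u, v) \<in> edges F"
    and reach: "\<forall>v \<in> verts F. \<exists>p. is_tine F p \<and> last p = v"
    and le: "\<forall>v \<in> verts F. lab F v \<le> length w" and lr: "lab F (root F) = 0"
    and inc: "\<forall>(u, v) \<in> edges F. lab F u < lab F v"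
    and f3: "\<forall>i. honest_idx w i \<longrightarrow> (\<exists>!v. v \<in> verts F \<and> lab F v = i)"
    and f4: "\<forall>i j p q. honest_idx w i \<and> honest_idx w j \<and> i < j \<and> is_tine F p \<and> is_tine F q \<and>
        lab F (last p) = i \<and> lab F (last q) = j \<longrightarrow> tine_len p < tine_len q"
    using assms unfolding is_fork_def by (elim conjE) (rule that)
  show "finite (verts F)" "root F \<in> verts F" "edges F \<subseteq> verts F \<times> verts F" "lab F (root F) = 0"
    by fact+
  show "(u, root F) \<notin> edges F" using nort by blast
  show "v \<in> verts F \<Longrightarrow> v \<noteq> root F \<Longrightarrow> \<exists>u. (u, v) \<in> edges F" using par by blast
  show "(u, v) \<in> edges F \<Longrightarrow> (u', v) \<in> edges F \<Longrightarrow> u = u'" using sub nort par by blast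
  show "v \<in> verts F \<Longrightarrow> \<exists>p. is_tine F p \<and> last p = v" using reach by blast
  show "v \<in> verts F \<Longrightarrow> lab F v \<le> length w" using le by blast
  show "(u, v) \<in> edges F \<Longrightarrow> lab F u < lab F v" using inc by blast
  show "honest_idx w i \<Longrightarrow> \<exists>!v. v \<in> verts F \<and> lab F v = i" using f3 by blast
  show "\<lbrakk>honest_idx w i; honest_idx w j; i < j; is_tine F p; is_tine F q;
      lab F (last p) = i; lab F (last q) = j\<rbrakk> \<Longrightarrow> tine_len p < tine_len q" using f4 by blast
qed

lemma is_forkI:
  assumes "finite (verts F)"
    and "root F \<in> verts F"
    and "edges F \<subseteq> verts F \<times> verts F"
    and "\<And>u. (u, root F) \<notin> edges F"
    and "\<And>v. v \<in> verts F \<Longrightarrow> v \<noteq> root F \<Longrightarrow> \<exists>u. (u, v) \<in> edges F"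
    and "\<And>u u' v. (u, v) \<in> edges F \<Longrightarrow> (u', v) \<in> edges F \<Longrightarrow> u = u'"
    and "\<And>v. v \<in> verts F \<Longrightarrow> \<exists>p. is_tine F p \<and> last p = v"
    and "\<And>v. v \<in> verts F \<Longrightarrow> lab F v \<le> length w"
    and "lab F (root F) = 0"
    and "\<And>u v. (u, v) \<in> edges F \<Longrightarrow> lab F u < lab F v"
    and "\<And>i. honest_idx w i \<Longrightarrow> \<exists>!v. v \<in> verts F \<and> lab F v = i"
    and "\<And>i j p q. \<lbrakk>honest_idx w i; honest_idx w j; i < j; is_tine F p; is_tine F q;
        lab F (last p) = i; lab F (last q) = j\<rbrakk> \<Longrightarrow> tine_len p < tine_len q"
  shows "is_fork w F"
  unfolding is_fork_def
proof (intro conjI)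
  show "\<forall>(u, v) \<in> edges F. v \<noteq> root F" using assms(4) by blast
  show "\<forall>v \<in> verts F - {root F}. \<exists>!u. (u, v) \<in> edges F" using assms(5,6) by blast
  show "\<forall>v \<in> verts F. \<exists>p. is_tine F p \<and> last p = v" using assms(7) by blast
  show "\<forall>v \<in> verts F. lab F v \<le> length w" using assms(8) by blast
  show "\<forall>(u, v) \<in> edges F. lab F u < lab F v" using assms(10) by blast
  show "\<forall>i. honest_idx w i \<longrightarrow> (\<exists>!v. v \<in> verts F \<and> lab F v = i)" using assms(11) by blast
  show "\<forall>i j p q. honest_idx w i \<and> honest_idx w j \<and> i < j \<and> is_tine F p \<and> is_tine F q \<and>
      lab F (last p) = i \<and> lab F (last q) = j \<longrightarrow> tine_len p < tine_len q"
    using assms(12) by blast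
qed (fact assms)+

lemma is_tine_singleton: "is_tine F [a] \<longleftrightarrow> a = root F \<and> a \<in> verts F"
  unfolding is_tine_def by auto

lemma is_tine_snoc:
  assumes "p \<noteq> []"
  shows "is_tine F (p @ [u]) \<longleftrightarrow> is_tine F p \<and> (last p, u) \<in> edges F \<and> u \<in> verts F"
proof -
  have "(\<forall>i. i + 1 < length (p @ [u]) \<longrightarrow> ((p @ [u]) ! i, (p @ [u]) ! (i + 1)) \<in> edges F) \<longleftrightarrow>
      (\<forall>i. i + 1 < length p \<longrightarrow> (p ! i, p ! (i + 1)) \<in> edges F) \<and> (last p, u) \<in> edges F"
    using assms by (auto simp: nth_append last_conv_nth less_Suc_eq)
      (metis Suc_inject Suc_pred length_greater_0_conv)
  then show ?thesis
    using assms unfolding is_tine_def by auto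
qed

lemma tine_len_snoc: "p \<noteq> [] \<Longrightarrow> tine_len (p @ [u]) = Suc (tine_len p)"
  unfolding tine_len_def by simp

lemma is_tine_induct[consumes 1, case_names root snoc]:
  assumes "is_tine F p"
    and "P [root F]"
    and "\<And>q u. \<lbrakk>is_tine F q; (last q, u) \<in> edges F; u \<in> verts F; P q\<rbrakk> \<Longrightarrow> P (q @ [u])"
  shows "P p"
  using assms(1)
proof (induction p rule: rev_induct)
  case Nil
  then show ?case by (simp add: is_tine_def)
next
  case (snoc u q)
  show ?case
  proof (cases "q = []")
    case True
    then show ?thesis using snoc.prems assms(2) by (simp add: is_tine_singleton)
  next
    case False
    then show ?thesis using snoc assms(3) by (simp add: is_tine_snoc)
  qed
qed

lemma is_tine_cases[consumes 1, case_names root snoc]: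
  assumes "is_tine F p"
  obtains "p = [root F]"
    | q u where "p = q @ [u]" "is_tine F q" "(last q, u) \<in> edges F" "u \<in> verts F"
  using assms by (induction rule: is_tine_induct) auto

lemma is_tine_nonempty: "is_tine F p \<Longrightarrow> p \<noteq> []"
  unfolding is_tine_def by simp

lemma is_tine_last_in_verts: "is_tine F p \<Longrightarrow> last p \<in> verts F"
  unfolding is_tine_def using last_in_set by blast

lemma fork_tine_unique:
  assumes F: "is_fork x F" and p: "is_tine F p" and q: "is_tine F q" and "last p = last q"
  shows "p = q"
  using p q \<open>last p = last q\<close>
proof (induction arbitrary: q rule: is_tine_induct)
  case root
  from root.prems(1) show ?case
  proof (cases rule: is_tine_cases)
    case (snoc q' u)
    then show ?thesis using root.prems(2) fork_no_edge_into_root[OF F] by simp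
  qed simp
next
  case (snoc p' u)
  note IH = snoc.IH and p'_edge = snoc.hyps(2) and same_last = snoc.prems(2)
  from snoc.prems(1) show ?case
  proof (cases rule: is_tine_cases)
    case root
    then show ?thesis using same_last p'_edge fork_no_edge_into_root[OF F] by simp
  next
    case (snoc q' u')
    then have "u' = u" using same_last by simp
    then have "last p' = last q'"
      using fork_parent_unique[OF F p'_edge] \<open>(last q', u') \<in> edges F\<close> by blast
    then show ?thesis using IH snoc \<open>u' = u\<close> by simp
  qed
qed

lemma fork_tine_len_le_lab:
  assumes F: "is_fork x F" and "is_tine F p"
  shows "tine_len p \<le> lab F (last p)"
  using assms(2)
proof (induction rule: is_tine_induct)
  case root
  then show ?case by (simp add: tine_len_def)
next
  case (snoc q u)
  have "tine_len (q @ [u]) = Suc (tine_len q)"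
    using is_tine_nonempty[OF snoc.hyps(1)] by (rule tine_len_snoc)
  also have "\<dots> \<le> Suc (lab F (last q))"
    using snoc.IH by simp
  also have "\<dots> \<le> lab F u"
    using fork_lab_edge[OF F snoc.hyps(2)] by simp
  finally show ?case by simp
qed

lemma fork_max_tine_exists:
  assumes F: "is_fork x F"
  shows "\<exists>p. max_tine F p"
proof -
  let ?S = "tine_len ` {p. is_tine F p}"
  have "tine_len p \<le> length x" if "is_tine F p" for p
    using fork_tine_len_le_lab[OF F that] fork_lab_le[OF F is_tine_last_in_verts[OF that]] by linarith
  then have "?S \<subseteq> {..length x}" by auto
  then have fin: "finite ?S" by (rule finite_subset) simp
  have "is_tine F [root F]"
    using fork_root_in_verts[OF F] by (simp add: is_tine_singleton)
  then have "?S \<noteq> {}" by blast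
  then obtain p where "is_tine F p" "tine_len p = Max ?S"
    using Max_in[OF fin] by auto
  then show ?thesis
    unfolding max_tine_def using fin by auto
qed

definition extend_fork :: "fork \<Rightarrow> nat \<Rightarrow> nat \<Rightarrow> nat \<Rightarrow> fork" where
  "extend_fork A u v i =
     A\<lparr>verts := insert v (verts A), edges := insert (u, v) (edges A), lab := (lab A)(v := i)\<rparr>"

lemma extend_fork_simps [simp]:
  "verts (extend_fork A u v i) = insert v (verts A)"
  "edges (extend_fork A u v i) = insert (u, v) (edges A)"
  "root (extend_fork A u v i) = root A"
  "lab (extend_fork A u v i) = (lab A)(v := i)"
  unfolding extend_fork_def by simp_all

lemma is_tine_mono:
  assumes "is_tine A p" and "verts A \<subseteq> verts B" and "edges A \<subseteq> edges B" and "root B = root A"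
  shows "is_tine B p"
  using assms unfolding is_tine_def by auto

lemma is_tine_extend_fork:
  assumes F: "is_fork x A" and u: "u \<in> verts A" and v: "v \<notin> verts A"
  shows "is_tine (extend_fork A u v i) q \<longleftrightarrow>
    is_tine A q \<or> (\<exists>q'. is_tine A q' \<and> last q' = u \<and> q = q' @ [v])"
    (is "is_tine ?B q \<longleftrightarrow> _")
proof
  assume "is_tine ?B q"
  then show "is_tine A q \<or> (\<exists>q'. is_tine A q' \<and> last q' = u \<and> q = q' @ [v])"
  proof (induction rule: is_tine_induct)
    case root
    show ?case using fork_root_in_verts[OF F] by (simp add: is_tine_singleton)
  next
    case (snoc q b)
    from snoc.IH show ?case
    proof
      assume q: "is_tine A q"
      show ?case
      proof (cases "(last q, b) = (u, v)")
        case False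
        then have "(last q, b) \<in> edges A" using snoc.hyps(2) by auto
        moreover have "b \<in> verts A" using calculation fork_edges_subset[OF F] by blast
        ultimately show ?thesis using q is_tine_snoc is_tine_nonempty by blast
      qed (use q in auto)
    next
      assume "\<exists>q'. is_tine A q' \<and> last q' = u \<and> q = q' @ [v]"
      then have "last q = v" by auto
      then show ?case using snoc.hyps(2) fork_edges_subset[OF F] u v by auto
    qed
  qed
next
  have old: "is_tine ?B q" if "is_tine A q" for q
    using that by (rule is_tine_mono) auto
  assume "is_tine A q \<or> (\<exists>q'. is_tine A q' \<and> last q' = u \<and> q = q' @ [v])"
  then show "is_tine ?B q"
  proof
    assume "\<exists>q'. is_tine A q' \<and> last q' = u \<and> q = q' @ [v]"
    then obtain q' where "is_tine A q'" "last q' = u" "q = q' @ [v]" by blast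
    then show ?thesis using old is_tine_nonempty is_tine_snoc by simp
  qed (rule old)
qed

lemma honest_idx_snoc:
  "honest_idx (x @ [b]) i \<longleftrightarrow> honest_idx x i \<or> (i = Suc (length x) \<and> \<not> b)"
  unfolding honest_idx_def by (auto simp: nth_append le_Suc_eq)

lemma is_fork_Nil:
  assumes "verts A = {root A}" and "edges A = {}" and "lab A (root A) = 0"
  shows "is_fork [] A"
proof -
  have no_honest: "\<not> honest_idx [] i" for i
    by (simp add: honest_idx_def)
  have root_tine: "is_tine A [root A]"
    using assms(1) by (simp add: is_tine_singleton)
  show ?thesis
    by (rule is_forkI) (use assms no_honest root_tine in auto)
qed

lemma is_fork_snoc_adversarial:
  assumes F: "is_fork x F"
  shows "is_fork (x @ [True]) F"
proof (rule is_forkI)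
  show "lab F v \<le> length (x @ [True])" if "v \<in> verts F" for v
    using fork_lab_le[OF F that] by simp
  show "\<exists>!v. v \<in> verts F \<and> lab F v = i" if "honest_idx (x @ [True]) i" for i
    using fork_honest_ex1[OF F] that by (simp add: honest_idx_snoc)
  show "tine_len p < tine_len q"
    if "honest_idx (x @ [True]) i" "honest_idx (x @ [True]) j" "i < j" "is_tine F p" "is_tine F q"
      "lab F (last p) = i" "lab F (last q) = j" for i j p q
    using fork_honest_depth[OF F] that by (simp add: honest_idx_snoc)
qed (fact is_forkD[OF F])+

lemma extend_fork_honest_ex1:
  fixes A :: fork and x :: "bool list" and u v :: nat
  defines "B \<equiv> extend_fork A u v (Suc (length x))"
  assumes F: "is_fork x A" and v: "v \<notin> verts A" and i: "honest_idx (x @ [False]) i"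
  shows "\<exists>!w. w \<in> verts B \<and> lab B w = i"
proof -
  have lab_A: "lab B w = lab A w" "lab A w \<le> length x" if "w \<in> verts A" for w
    using that v fork_lab_le[OF F] by (auto simp: B_def)
  show ?thesis
  proof (cases "i = Suc (length x)")
    case True
    then show ?thesis
      using lab_A by (intro ex1I[of _ v]) (fastforce simp: B_def)+
  next
    case False
    then have "honest_idx x i"
      using i by (simp add: honest_idx_snoc)
    then obtain w where w: "w \<in> verts A" "lab A w = i"
      and uniq: "\<And>w'. w' \<in> verts A \<Longrightarrow> lab A w' = i \<Longrightarrow> w' = w"
      using fork_honest_ex1[OF F] by blast
    have "i \<le> length x"
      using \<open>honest_idx x i\<close> by (simp add: honest_idx_def)
    show ?thesis
    proof (rule ex1I[of _ w])
      show "w \<in> verts B \<and> lab B w = i"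
        using w lab_A by (simp add: B_def)
      show "w' = w" if "w' \<in> verts B \<and> lab B w' = i" for w'
        using that uniq \<open>i \<le> length x\<close> by (auto simp: B_def split: if_splits)
    qed
  qed
qed

lemma extend_fork_honest_depth:
  fixes A :: fork and x :: "bool list" and p :: "nat list" and v :: nat
  defines "B \<equiv> extend_fork A (last p) v (Suc (length x))"
  assumes F: "is_fork x A" and P: "max_tine A p" and v: "v \<notin> verts A"
    and i: "honest_idx (x @ [False]) i" and j: "honest_idx (x @ [False]) j" and "i < j"
    and q1: "is_tine B q1" and q2: "is_tine B q2"
    and lab_q1: "lab B (last q1) = i" and lab_q2: "lab B (last q2) = j"
  shows "tine_len q1 < tine_len q2"
proof -
  have p: "is_tine A p"
    using P by (simp add: max_tine_def)
  note tines_B =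
    is_tine_extend_fork[OF F is_tine_last_in_verts[OF p] v, where i = "Suc (length x)", folded B_def]
  have lab_A: "lab B (last q) = lab A (last q)" "lab A (last q) \<le> length x" if "is_tine A q" for q
    using is_tine_last_in_verts[OF that] v fork_lab_le[OF F] by (auto simp: B_def)
  have tine_A: "is_tine A q" if "is_tine B q" "lab B (last q) \<le> length x" for q
    using that tines_B by (auto simp: B_def)
  have "j \<le> Suc (length x)"
    using j by (simp add: honest_idx_def)
  then have q1_A: "is_tine A q1"
    using tine_A[OF q1] lab_q1 \<open>i < j\<close> by simp
  show ?thesis
  proof (cases "j = Suc (length x)")
    case True
    then have "\<not> is_tine A q2"
      using lab_A lab_q2 by fastforce
    then obtain q' where q': "is_tine A q'" "last q' = last p" "q2 = q' @ [v]"
      using q2 tines_B by blast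
    then have "tine_len q2 = Suc (tine_len p)"
      using fork_tine_unique[OF F q'(1) p] is_tine_nonempty[OF p] tine_len_snoc by simp
    moreover have "tine_len q1 \<le> tine_len p"
      using P q1_A by (simp add: max_tine_def)
    ultimately show ?thesis by simp
  next
    case False
    then have "honest_idx x i" "honest_idx x j"
      using i j \<open>i < j\<close> \<open>j \<le> Suc (length x)\<close> by (auto simp: honest_idx_snoc)
    moreover have q2_A: "is_tine A q2"
      using tine_A[OF q2] lab_q2 False \<open>j \<le> Suc (length x)\<close> by simp
    ultimately show ?thesis
      using fork_honest_depth[OF F _ _ \<open>i < j\<close> q1_A q2_A] lab_A(1) lab_q1 lab_q2 q1_A q2_A by simp
  qed
qed

lemma is_fork_snoc_honest:
  assumes F: "is_fork x A" and P: "max_tine A p" and v: "v \<notin> verts A"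
  shows "is_fork (x @ [False]) (extend_fork A (last p) v (Suc (length x)))"
    (is "is_fork _ ?B")
proof (rule is_forkI)
  have p: "is_tine A p"
    using P by (simp add: max_tine_def)
  have lp: "last p \<in> verts A"
    using is_tine_last_in_verts[OF p] .
  have lab_A: "lab ?B w = lab A w" "lab A w \<le> length x" if "w \<in> verts A" for w
    using that v fork_lab_le[OF F] by auto
  show "finite (verts ?B)"
    using fork_finite[OF F] by simp
  show "root ?B \<in> verts ?B"
    using fork_root_in_verts[OF F] by simp
  show "edges ?B \<subseteq> verts ?B \<times> verts ?B"
    using fork_edges_subset[OF F] lp by auto
  show "(u, root ?B) \<notin> edges ?B" for u
    using fork_no_edge_into_root[OF F] fork_root_in_verts[OF F] v by auto
  show "\<exists>u. (u, w) \<in> edges ?B" if "w \<in> verts ?B" "w \<noteq> root ?B" for w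
    using that fork_parent_exists[OF F] by auto
  show "u = u'" if "(u, w) \<in> edges ?B" "(u', w) \<in> edges ?B" for u u' w
    using that fork_parent_unique[OF F] fork_edges_subset[OF F] v by auto
  show "\<exists>q. is_tine ?B q \<and> last q = w" if "w \<in> verts ?B" for w
    using that fork_vertex_reachable[OF F] is_tine_extend_fork[OF F lp v] p by auto
  show "lab ?B w \<le> length (x @ [False])" if "w \<in> verts ?B" for w
    using that lab_A by fastforce
  show "lab ?B (root ?B) = 0"
    using fork_lab_root[OF F] fork_root_in_verts[OF F] v by auto
  show "lab ?B u < lab ?B w" if "(u, w) \<in> edges ?B" for u w
    using that fork_lab_edge[OF F] fork_edges_subset[OF F] lab_A lp v by fastforce
  show "\<exists>!w. w \<in> verts ?B \<and> lab ?B w = i" if "honest_idx (x @ [False]) i" for i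
    using extend_fork_honest_ex1[OF F v that] .
  show "tine_len q1 < tine_len q2"
    if "honest_idx (x @ [False]) i" "honest_idx (x @ [False]) j" "i < j" "is_tine ?B q1" "is_tine ?B q2"
      "lab ?B (last q1) = i" "lab ?B (last q2) = j" for i j q1 q2
    using extend_fork_honest_depth[OF F P v that] by simp
qed

fun passive_play :: "bool list \<Rightarrow> nat \<Rightarrow> fork" where
  "passive_play w 0 = \<lparr>verts = {0}, edges = {}, root = 0, lab = (\<lambda>_. 0)\<rparr>"
| "passive_play w (Suc t) =
     (let A = passive_play w t in
      if w ! t then A else extend_fork A (last (SOME p. max_tine A p)) (Suc t) (Suc t))"

lemma passive_play_verts: "verts (passive_play w t) \<subseteq> {..t}"
  by (induction t) (auto simp: Let_def)

lemma passive_play_max_tine: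
  assumes "is_fork x (passive_play w t)"
  shows "max_tine (passive_play w t) (SOME p. max_tine (passive_play w t) p)"
  using fork_max_tine_exists[OF assms] by (rule someI_ex)

lemma is_fork_passive_play: "t \<le> length w \<Longrightarrow> is_fork (take t w) (passive_play w t)"
proof (induction t)
  case 0
  show ?case by (simp add: is_fork_Nil)
next
  case (Suc t)
  then have F: "is_fork (take t w) (passive_play w t)" by simp
  have take_Suc: "take (Suc t) w = take t w @ [w ! t]" and len: "length (take t w) = t"
    using Suc.prems by (simp_all add: take_Suc_conv_app_nth)
  show ?case
  proof (cases "w ! t")
    case True
    then show ?thesis
      using is_fork_snoc_adversarial[OF F] take_Suc by simp
  next
    case False
    have "Suc t \<notin> verts (passive_play w t)"
      using passive_play_verts by fastforce
    then show ?thesis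
      using is_fork_snoc_honest[OF F passive_play_max_tine[OF F]] take_Suc len False by (simp add: Let_def)
  qed
qed

lemma subfork_refl: "subfork F F"
  unfolding subfork_def by simp

lemma valid_play_passive_play: "valid_play w (passive_play w) (passive_play w)"
  unfolding valid_play_def
proof (intro conjI allI impI)
  fix t assume t: "1 \<le> t \<and> t \<le> length w"
  then obtain t' where t': "t = Suc t'" by (cases t) auto
  show "is_fork (take t w) (passive_play w t)" "is_fork (take t w) (passive_play w t)"
    using is_fork_passive_play t by simp_all
  show "subfork (passive_play w t) (passive_play w t)"
    by (rule subfork_refl)
  show "subfork (passive_play w (t - 1)) (passive_play w t)" if "w ! (t - 1)"
    using that t' subfork_refl by (simp add: Let_def)
  assume honest: "\<not> w ! (t - 1)"
  let ?A = "passive_play w t'"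
  have "is_fork (take t' w) ?A"
    using is_fork_passive_play t t' by simp
  moreover have "Suc t' \<notin> verts ?A"
    using passive_play_verts by fastforce
  ultimately show "\<exists>p v. max_tine (passive_play w (t - 1)) p \<and> v \<notin> verts (passive_play w (t - 1)) \<and>
       verts (passive_play w t) = insert v (verts (passive_play w (t - 1))) \<and>
       edges (passive_play w t) = insert (last p, v) (edges (passive_play w (t - 1))) \<and>
       root (passive_play w t) = root (passive_play w (t - 1)) \<and>
       (\<forall>u \<in> verts (passive_play w (t - 1)). lab (passive_play w t) u = lab (passive_play w (t - 1)) u) \<and>
       lab (passive_play w t) v = t"
    using passive_play_max_tine honest t' by (auto simp: Let_def)
qed auto

lemma wins_imp_not_settled:
  assumes play: "valid_play w A F" and "wins s k w A"
  shows "\<not> settled_for w s k"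
proof -
  obtain t where t: "s + k \<le> t" "t \<le> length w" "not_settled_in (A t) s"
    using \<open>wins s k w A\<close> unfolding wins_def by blast
  have "is_fork (take t w) (A t)"
  proof (cases t)
    case 0
    then show ?thesis
      using play unfolding valid_play_def by (simp add: is_fork_Nil)
  next
    case (Suc t')
    then show ?thesis
      using play t(2) unfolding valid_play_def by simp
  qed
  then show ?thesis
    using t unfolding settled_for_def by blast
qed

theorem lemma1:
  fixes s k T :: nat and D :: "bool list pmf"
  assumes "\<forall>w \<in> set_pmf D. length w = T"
  shows "settlement_value D T s k \<le> measure_pmf.prob D {w. \<not> settled_for w s k}"
  unfolding settlement_value_def
proof (rule cSUP_least)
  have "valid_adversary T (\<lambda>w. (passive_play w, passive_play w))"
    unfolding valid_adversary_def using valid_play_passive_play by simp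
  then show "{adv. valid_adversary T adv} \<noteq> {}" by blast
next
  fix adv assume "adv \<in> {adv. valid_adversary T adv}"
  then have "wins s k w (fst (adv w)) \<Longrightarrow> \<not> settled_for w s k" if "w \<in> set_pmf D" for w
    using that assms wins_imp_not_settled unfolding valid_adversary_def by auto
  then show "measure_pmf.prob D {w. wins s k w (fst (adv w))} \<le> measure_pmf.prob D {w. \<not> settled_for w s k}"
    by (intro measure_pmf.finite_measure_mono_AE) (auto simp: AE_measure_pmf_iff)
qed

end
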